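(* Let $q\ge 7$ and $s\in[1,7]$ be integers, $C$ a finite set with $|C|=2q+s$, and $M\in\mathcal M(6,q,C)$. If the maximum degree of the graph $G$ associated with $M$ is at least $4$, then $q\le 40-5s$.
   Context: $\mathcal M(6,q,C)$ is the set of $6\times q$ matrices $M$ with entries from $C$ such that each row has $q$ pairwise distinct entries, each column has $6$ pairwise distinct entries, and every pair of distinct colours of $C$ appears together in some row or some column of $M$. The frequency of a colour is the number of entries of $M$ equal to it. For rows $i\ne k$, $r(i,k)$ is the number of colours of frequency exactly $2$ appearing in both row $i$ and row $k$. The graph $G$ associated with $M$ has vertex set $\{1,\dots,6\}$ (the rows), with $\{i,k\}$ an edge iff $r(i,k)\ge 1$. *)

theory Defs
  imports Main
begin

text \<open>A 6 x q matrix is a function M :: nat => nat => 'c, with rows indexed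
  by {0..<6} and columns by {0..<q}; values outside this range are irrelevant.\<close>

definition in_M :: "nat \<Rightarrow> nat \<Rightarrow> 'c set \<Rightarrow> (nat \<Rightarrow> nat \<Rightarrow> 'c) \<Rightarrow> bool" where
  "in_M p q C M \<longleftrightarrow>
     (\<forall>i<p. \<forall>j<q. M i j \<in> C) \<and>
     (\<forall>i<p. inj_on (M i) {0..<q}) \<and>
     (\<forall>j<q. inj_on (\<lambda>i. M i j) {0..<p}) \<and>
     (\<forall>a\<in>C. \<forall>b\<in>C. a \<noteq> b \<longrightarrow>
        (\<exists>i<p. a \<in> M i ` {0..<q} \<and> b \<in> M i ` {0..<q}) \<or>
        (\<exists>j<q. a \<in> (\<lambda>i. M i j) ` {0..<p} \<and> b \<in> (\<lambda>i. M i j) ` {0..<p}))"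

definition freq :: "nat \<Rightarrow> nat \<Rightarrow> (nat \<Rightarrow> nat \<Rightarrow> 'c) \<Rightarrow> 'c \<Rightarrow> nat" where
  "freq p q M c = card {(i, j). i < p \<and> j < q \<and> M i j = c}"

definition rcount :: "nat \<Rightarrow> nat \<Rightarrow> (nat \<Rightarrow> nat \<Rightarrow> 'c) \<Rightarrow> nat \<Rightarrow> nat \<Rightarrow> nat" where
  "rcount p q M i k = card {c. freq p q M c = 2 \<and> c \<in> M i ` {0..<q} \<and> c \<in> M k ` {0..<q}}"

definition assoc_adj :: "nat \<Rightarrow> nat \<Rightarrow> (nat \<Rightarrow> nat \<Rightarrow> 'c) \<Rightarrow> nat \<Rightarrow> nat \<Rightarrow> bool" where
  "assoc_adj p q M i k \<longleftrightarrow> i < p \<and> k < p \<and> i \<noteq> k \<and> rcount p q M i k \<ge> 1"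

definition assoc_degree :: "nat \<Rightarrow> nat \<Rightarrow> (nat \<Rightarrow> nat \<Rightarrow> 'c) \<Rightarrow> nat \<Rightarrow> nat" where
  "assoc_degree p q M i = card {k. assoc_adj p q M i k}"

definition assoc_maxdeg :: "nat \<Rightarrow> nat \<Rightarrow> (nat \<Rightarrow> nat \<Rightarrow> 'c) \<Rightarrow> nat" where
  "assoc_maxdeg p q M = Max (assoc_degree p q M ` {0..<p})"

end

(*
  Rows have pairwise distinct entries, so the frequency of a colour is the number of rows
  containing it, and rows i and k are adjacent in G exactly when some colour occurs in these
  two rows only.  Every other colour shares a row or a column with some occurrence of a colour c.
  If c occurs only once, this confines C to one row and one column; so as soon as |C| > q + 6,
  every colour occurs in at least two rows.  If c occurs exactly in rows i and k, it confines C
  to these two rows and the 2 * 4 further cells of the two columns of c, whence rows i and k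
  share at most 2q + 8 - |C| = 8 - s colours.  A row of degree at least 4 has at most one
  non-neighbour, so each of its colours also lies in a neighbouring row (a colour occurring only
  in the row and its non-neighbour would make them adjacent); hence q <= 5 (8 - s).
*)

theory Submission
  imports Defs
begin

abbreviation row_colours :: "nat \<Rightarrow> (nat \<Rightarrow> nat \<Rightarrow> 'c) \<Rightarrow> nat \<Rightarrow> 'c set" where
  "row_colours q M i \<equiv> M i ` {0..<q}"

abbreviation col_colours :: "nat \<Rightarrow> (nat \<Rightarrow> nat \<Rightarrow> 'c) \<Rightarrow> nat \<Rightarrow> 'c set" where
  "col_colours p M j \<equiv> (\<lambda>i. M i j) ` {0..<p}"

definition colour_rows :: "nat \<Rightarrow> nat \<Rightarrow> (nat \<Rightarrow> nat \<Rightarrow> 'c) \<Rightarrow> 'c \<Rightarrow> nat set" where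
  "colour_rows p q M c = {i. i < p \<and> c \<in> row_colours q M i}"

lemma colour_rows_subset: "colour_rows p q M c \<subseteq> {0..<p}"
  by (auto simp: colour_rows_def)

lemma finite_colour_rows [simp]: "finite (colour_rows p q M c)"
  by (rule finite_subset[OF colour_rows_subset]) simp

lemma in_M_row_card:
  assumes "in_M p q C M" "i < p"
  shows "card (row_colours q M i) = q"
  using assms by (simp add: in_M_def card_image)

lemma in_M_row_inj:
  assumes "in_M p q C M" "i < p" "j < q" "j' < q" "M i j = M i j'"
  shows "j = j'"
proof -
  have "inj_on (M i) {0..<q}"
    using assms(1,2) by (simp add: in_M_def)
  from inj_onD[OF this assms(5)] assms(3,4) show ?thesis by simp
qed

lemma freq_eq_card_colour_rows:
  assumes "in_M p q C M"
  shows "freq p q M c = card (colour_rows p q M c)"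
proof -
  let ?S = "{(i, j). i < p \<and> j < q \<and> M i j = c}"
  have inj: "inj_on fst ?S"
    using in_M_row_inj[OF assms] by (auto intro!: inj_onI)
  moreover have "fst ` ?S = colour_rows p q M c"
  proof (intro equalityI subsetI)
    fix i assume "i \<in> fst ` ?S"
    then show "i \<in> colour_rows p q M c"
      by (auto simp: colour_rows_def)
  next
    fix i assume "i \<in> colour_rows p q M c"
    then obtain j where "i < p" "j < q" "M i j = c"
      by (auto simp: colour_rows_def)
    then have "(i, j) \<in> ?S" by simp
    then show "i \<in> fst ` ?S"
      by (rule rev_image_eqI) simp
  qed
  ultimately show ?thesis
    unfolding freq_def using card_image[OF inj] by simp
qed

lemma card_eq_2_and_mem_iff_eq_doubleton:
  assumes "finite A" "a \<noteq> b"
  shows "card A = 2 \<and> a \<in> A \<and> b \<in> A \<longleftrightarrow> A = {a, b}"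
proof
  assume "card A = 2 \<and> a \<in> A \<and> b \<in> A"
  moreover have "card {a, b} = 2"
    using assms(2) by simp
  ultimately show "A = {a, b}"
    using card_subset_eq[OF assms(1), of "{a, b}"] by simp
qed (use assms(2) in simp)

lemma rcount_eq_card_colour_rows:
  assumes "in_M p q C M" "i < p" "k < p" "i \<noteq> k"
  shows "rcount p q M i k = card {c. colour_rows p q M c = {i, k}}"
proof -
  have mem: "c \<in> row_colours q M j \<longleftrightarrow> j \<in> colour_rows p q M c" if "j < p" for c j
    using that by (simp add: colour_rows_def)
  have "freq p q M c = 2 \<and> c \<in> row_colours q M i \<and> c \<in> row_colours q M k
      \<longleftrightarrow> colour_rows p q M c = {i, k}" for c
    using mem[OF assms(2)] mem[OF assms(3)] freq_eq_card_colour_rows[OF assms(1)]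
      card_eq_2_and_mem_iff_eq_doubleton[OF finite_colour_rows[of p q M c] assms(4)]
    by simp
  then show ?thesis
    unfolding rcount_def by (intro arg_cong[where f = card] Collect_cong)
qed

lemma assoc_adj_iff_colour_rows:
  assumes "in_M p q C M"
  shows "assoc_adj p q M i k \<longleftrightarrow> i \<noteq> k \<and> (\<exists>c. colour_rows p q M c = {i, k})"
proof (cases "i < p \<and> k < p \<and> i \<noteq> k")
  case True
  then have "rcount p q M i k = card {c. colour_rows p q M c = {i, k}}"
    using rcount_eq_card_colour_rows[OF assms] by blast
  moreover have "finite {c. colour_rows p q M c = {i, k}}"
    by (rule finite_subset[of _ "row_colours q M i"]) (auto simp: colour_rows_def)
  ultimately show ?thesis
    using True by (auto simp: assoc_adj_def Suc_le_eq card_gt_0_iff)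
next
  case False
  then show ?thesis
    using colour_rows_subset by (fastforce simp: assoc_adj_def)
qed

lemma in_M_shares_line:
  assumes "in_M p q C M" "c \<in> C" "d \<in> C" "c \<noteq> d"
  shows "\<exists>i<p. \<exists>j<q. M i j = c \<and> (d \<in> row_colours q M i \<or> d \<in> col_colours p M j)"
proof -
  from assms have "(\<exists>i<p. c \<in> row_colours q M i \<and> d \<in> row_colours q M i) \<or>
      (\<exists>j<q. c \<in> col_colours p M j \<and> d \<in> col_colours p M j)"
    unfolding in_M_def by blast
  then show ?thesis
  proof
    assume "\<exists>i<p. c \<in> row_colours q M i \<and> d \<in> row_colours q M i"
    then show ?thesis by fastforce
  next
    assume "\<exists>j<q. c \<in> col_colours p M j \<and> d \<in> col_colours p M j"
    then show ?thesis by fastforce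
  qed
qed

lemma card_col_colours_le: "card (col_colours p M j) \<le> p"
  using card_image_le[of "{0..<p}" "\<lambda>i. M i j"] by simp

lemma in_M_subset_row_col_if_colour_rows_singleton:
  assumes M: "in_M p q C M" and rows: "colour_rows p q M c = {i}"
    and "j < q" "M i j = c"
  shows "C \<subseteq> row_colours q M i \<union> col_colours p M j"
proof
  fix d assume "d \<in> C"
  have "i < p"
    using rows colour_rows_subset by fastforce
  show "d \<in> row_colours q M i \<union> col_colours p M j"
  proof (cases "d = c")
    case True
    with assms(3,4) show ?thesis by auto
  next
    case False
    have "c \<in> C"
      using M \<open>i < p\<close> assms(3,4) by (auto simp: in_M_def)
    with in_M_shares_line[OF M _ \<open>d \<in> C\<close>] False obtain i' j' where
      "i' < p" "j' < q" "M i' j' = c" and d: "d \<in> row_colours q M i' \<or> d \<in> col_colours p M j'"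
      by blast
    then have "i' \<in> colour_rows p q M c"
      by (auto simp: colour_rows_def)
    with rows have "i' = i" by simp
    with in_M_row_inj[OF M \<open>i < p\<close> assms(3) \<open>j' < q\<close>] assms(4) \<open>M i' j' = c\<close> have "j' = j"
      by simp
    with d \<open>i' = i\<close> show ?thesis by simp
  qed
qed

lemma card_colour_rows_ge_2:
  assumes M: "in_M p q C M" and "q + p < card C"
    and "i < p" "c \<in> row_colours q M i"
  shows "2 \<le> card (colour_rows p q M c)"
proof (rule ccontr)
  assume few: "\<not> ?thesis"
  have "i \<in> colour_rows p q M c"
    using assms by (simp add: colour_rows_def)
  have "card (colour_rows p q M c) \<le> Suc 0"
    using few by simp
  with \<open>i \<in> colour_rows p q M c\<close> have "card (colour_rows p q M c - {i}) = 0"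
    by (simp add: card_Diff_singleton)
  then have "colour_rows p q M c - {i} = {}"
    by simp
  with \<open>i \<in> colour_rows p q M c\<close> have rows: "colour_rows p q M c = {i}"
    by blast
  obtain j where "j < q" "M i j = c"
    using assms by auto
  from in_M_subset_row_col_if_colour_rows_singleton[OF M rows this]
  have "card C \<le> card (row_colours q M i \<union> col_colours p M j)"
    by (intro card_mono) auto
  also have "\<dots> \<le> card (row_colours q M i) + card (col_colours p M j)"
    by (rule card_Un_le)
  also have "\<dots> \<le> q + p"
    using in_M_row_card[OF M \<open>i < p\<close>] card_col_colours_le[where p=p and M=M and j=j] by simp
  finally show False
    using assms(2) by simp
qed

lemma in_M_subset_rows_cols_if_colour_rows_doubleton:
  assumes M: "in_M p q C M" and rows: "colour_rows p q M c = {i, k}"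
    and "j1 < q" "M i j1 = c" "j2 < q" "M k j2 = c"
  shows "C \<subseteq> row_colours q M i \<union> row_colours q M k
    \<union> (\<lambda>m. M m j1) ` ({0..<p} - {i, k}) \<union> (\<lambda>m. M m j2) ` ({0..<p} - {i, k})"
    (is "C \<subseteq> ?cover")
proof
  fix d assume "d \<in> C"
  have "i < p" "k < p"
    using rows colour_rows_subset by fastforce+
  show "d \<in> ?cover"
  proof (cases "d = c")
    case True
    with assms(3,4) show ?thesis by auto
  next
    case False
    have "c \<in> C"
      using M \<open>i < p\<close> assms(3,4) by (auto simp: in_M_def)
    with in_M_shares_line[OF M _ \<open>d \<in> C\<close>] False obtain i' j' where
      "i' < p" "j' < q" "M i' j' = c" and d: "d \<in> row_colours q M i' \<or> d \<in> col_colours p M j'"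
      by blast
    then have "i' \<in> colour_rows p q M c"
      by (auto simp: colour_rows_def)
    with rows have "i' = i \<or> i' = k"
      by simp
    then have "j' = j1 \<or> j' = j2"
      using in_M_row_inj[OF M \<open>i < p\<close> \<open>j' < q\<close> assms(3)]
        in_M_row_inj[OF M \<open>k < p\<close> \<open>j' < q\<close> assms(5)]
        \<open>M i' j' = c\<close> assms(4,6) by auto
    show ?thesis
    proof (cases "d \<in> row_colours q M i'")
      case True
      with \<open>i' = i \<or> i' = k\<close> show ?thesis by blast
    next
      case False
      with d obtain m where "m < p" "d = M m j'"
        by auto
      with \<open>j' < q\<close> have "d \<in> row_colours q M m" by simp
      with \<open>m < p\<close> \<open>d = M m j'\<close> \<open>j' = j1 \<or> j' = j2\<close> show ?thesis
        by (cases "m \<in> {i, k}") auto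
    qed
  qed
qed

lemma card_add_card_row_inter_le:
  assumes M: "in_M p q C M"
    and rows: "colour_rows p q M c = {i, k}" and "i \<noteq> k"
  shows "card C + card (row_colours q M i \<inter> row_colours q M k) \<le> 2 * q + 2 * (p - 2)"
proof -
  have "i \<in> colour_rows p q M c" "k \<in> colour_rows p q M c"
    using rows by simp_all
  then obtain j1 j2 where "i < p" "j1 < q" "M i j1 = c" "k < p" "j2 < q" "M k j2 = c"
    by (auto simp: colour_rows_def)
  let ?O = "{0..<p} - {i, k}"
  let ?rest = "\<lambda>j. (\<lambda>m. M m j) ` ?O"
  have "card ?O = p - 2"
    using \<open>i < p\<close> \<open>k < p\<close> \<open>i \<noteq> k\<close> by (simp add: card_Diff_subset)
  then have rest: "card (?rest j) \<le> p - 2" for j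
    using card_image_le[of ?O "\<lambda>m. M m j"] by simp
  from in_M_subset_rows_cols_if_colour_rows_doubleton[OF M rows \<open>j1 < q\<close> \<open>M i j1 = c\<close> \<open>j2 < q\<close> \<open>M k j2 = c\<close>]
  have "card C \<le> card (row_colours q M i \<union> row_colours q M k \<union> ?rest j1 \<union> ?rest j2)"
    by (intro card_mono) auto
  also have "\<dots> \<le> card (row_colours q M i \<union> row_colours q M k) + card (?rest j1) + card (?rest j2)"
    by (meson card_Un_le add_le_mono1 order_trans)
  also have "\<dots> \<le> card (row_colours q M i \<union> row_colours q M k) + 2 * (p - 2)"
    using rest[of j1] rest[of j2] by simp
  finally have "card C \<le> card (row_colours q M i \<union> row_colours q M k) + 2 * (p - 2)" .
  moreover have "card (row_colours q M i \<union> row_colours q M k)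
      + card (row_colours q M i \<inter> row_colours q M k) = 2 * q"
    using card_Un_Int[of "row_colours q M i" "row_colours q M k"]
      in_M_row_card[OF M \<open>i < p\<close>] in_M_row_card[OF M \<open>k < p\<close>] by simp
  ultimately show ?thesis
    by linarith
qed

lemma colour_in_neighbour_row:
  assumes M: "in_M p q C M" and "i < p" and deg: "p - 2 \<le> assoc_degree p q M i"
    and "x \<in> row_colours q M i" and twice: "2 \<le> card (colour_rows p q M x)"
  shows "\<exists>k. assoc_adj p q M i k \<and> x \<in> row_colours q M k"
proof (rule ccontr)
  assume none: "\<not> ?thesis"
  let ?N = "{k. assoc_adj p q M i k}"
  have N: "?N \<subseteq> {0..<p} - {i}"
    by (auto simp: assoc_adj_def)
  then have non_adj: "card ({0..<p} - {i} - ?N) \<le> 1"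
    using deg \<open>i < p\<close> by (simp add: assoc_degree_def card_Diff_subset finite_subset)
  have "colour_rows p q M x - {i} \<subseteq> {0..<p} - {i} - ?N"
    using none colour_rows_subset by (fastforce simp: colour_rows_def)
  from card_mono[OF _ this] non_adj have "card (colour_rows p q M x - {i}) \<le> 1"
    by simp
  moreover have "i \<in> colour_rows p q M x"
    using \<open>i < p\<close> \<open>x \<in> row_colours q M i\<close> by (simp add: colour_rows_def)
  ultimately have "card (colour_rows p q M x - {i}) = 1"
    using twice by (simp add: card_Diff_singleton)
  then obtain m where m: "colour_rows p q M x - {i} = {m}"
    by (rule card_1_singletonE)
  with \<open>i \<in> colour_rows p q M x\<close> have "colour_rows p q M x = {i, m}" "i \<noteq> m"
    by auto
  then have "assoc_adj p q M i m"
    using assoc_adj_iff_colour_rows[OF M] by blast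
  moreover from m have "x \<in> row_colours q M m"
    by (auto simp: colour_rows_def)
  ultimately show False
    using none by blast
qed

lemma card_row_le_if_assoc_degree_ge:
  assumes M: "in_M p q C M" and big: "q + p < card C"
    and "i < p" and deg: "p - 2 \<le> assoc_degree p q M i"
  shows "q \<le> (p - 1) * (2 * q + 2 * (p - 2) - card C)"
proof -
  let ?N = "{k. assoc_adj p q M i k}"
  let ?bound = "2 * q + 2 * (p - 2) - card C"
  have N: "?N \<subseteq> {0..<p} - {i}"
    by (auto simp: assoc_adj_def)
  then have "finite ?N"
    by (rule finite_subset) simp
  have "card ?N \<le> p - 1"
    using card_mono[OF _ N] \<open>i < p\<close> by simp
  have cover: "row_colours q M i \<subseteq> (\<Union>k\<in>?N. row_colours q M i \<inter> row_colours q M k)"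
  proof
    fix x assume x: "x \<in> row_colours q M i"
    from colour_in_neighbour_row[OF M \<open>i < p\<close> deg x
        card_colour_rows_ge_2[OF M big \<open>i < p\<close> x]]
    show "x \<in> (\<Union>k\<in>?N. row_colours q M i \<inter> row_colours q M k)"
      using x by blast
  qed
  have inter: "card (row_colours q M i \<inter> row_colours q M k) \<le> ?bound" if "k \<in> ?N" for k
  proof -
    from that obtain c where "colour_rows p q M c = {i, k}" "i \<noteq> k"
      using assoc_adj_iff_colour_rows[OF M] by auto
    from card_add_card_row_inter_le[OF M this] show ?thesis
      by simp
  qed
  have "q = card (row_colours q M i)"
    using in_M_row_card[OF M \<open>i < p\<close>] by simp
  also have "\<dots> \<le> card (\<Union>k\<in>?N. row_colours q M i \<inter> row_colours q M k)"
    using cover \<open>finite ?N\<close> by (intro card_mono) auto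
  also have "\<dots> \<le> (\<Sum>k\<in>?N. card (row_colours q M i \<inter> row_colours q M k))"
    by (rule card_UN_le[OF \<open>finite ?N\<close>])
  also have "\<dots> \<le> (\<Sum>k\<in>?N. ?bound)"
    using inter by (rule sum_mono)
  also have "\<dots> = card ?N * ?bound"
    by simp
  also have "\<dots> \<le> (p - 1) * ?bound"
    using \<open>card ?N \<le> p - 1\<close> by simp
  finally show ?thesis .
qed

theorem claim5:
  fixes q s :: nat and C :: "'c set" and M :: "nat \<Rightarrow> nat \<Rightarrow> 'c"
  assumes "q \<ge> 7" and "1 \<le> s" and "s \<le> 7"
    and "finite C" and "card C = 2 * q + s"
    and "in_M 6 q C M"
    and "assoc_maxdeg 6 q M \<ge> 4"
  shows "int q \<le> 40 - 5 * int s"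
proof -
  have "assoc_maxdeg 6 q M \<in> assoc_degree 6 q M ` {0..<6}"
    unfolding assoc_maxdeg_def by (rule Max_in) auto
  then obtain i where "i < 6" "4 \<le> assoc_degree 6 q M i"
    using assms(7) by auto
  then have "q \<le> 5 * (2 * q + 8 - card C)"
    using card_row_le_if_assoc_degree_ge[OF assms(6)] assms(1,5) by simp
  then show ?thesis
    using assms(3,5) by simp
qed

end
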